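(* Let $X$ be a separable infinite-dimensional Banach space over $\mathbb{K}\in\{\mathbb{R},\mathbb{C}\}$ and let $T_1,\dots,T_N\in B(X)$ with $N\ge 2$. Suppose there exist a strictly increasing sequence $(n_k)$ of positive integers, a dense subset $X_0$ of $X$, and maps $S_k:\oplus_{i=1}^N X_0\to X$ ($k\in\mathbb{N}$) such that: (i) for each $x\in X_0$ and each $1\le i\le N$, $T_i^{n_k}x\to 0$ as $k\to\infty$; (ii) for each $\epsilon>0$, each $K\in\mathbb{N}$ and all $x_1,\dots,x_N\in X_0$ there exists $k\ge K$ with (a) $\|S_k(x_1,\dots,x_N)\|<\epsilon$ and (b) $\|T_i^{n_k}S_k(x_1,\dots,x_N)-x_i\|<\epsilon$ for all $1\le i\le N$. Then $T_1,\dots,T_N$ satisfy the Strong Disjoint Blow-up/Collapse Property, and hence $T_1,\dots,T_N$ possess a dense d-hypercyclic manifold.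
   Context: $B(X)$ is the algebra of bounded linear operators on $X$. Operators $T_1,\dots,T_N$ satisfy the Strong Disjoint Blow-up/Collapse Property if for every $L\in\mathbb{N}$ and all non-empty open sets $W,U_{1-L},\dots,U_0,U_1,\dots,U_N$ of $X$ with $0\in W$ there is $n\in\mathbb{N}$ with $W\cap T_1^{-n}(U_1)\cap\cdots\cap T_N^{-n}(U_N)\ne\emptyset$ and $U_\ell\cap T_1^{-n}(W)\cap\cdots\cap T_N^{-n}(W)\neq\emptyset$ for all $1-L\le \ell\le 0$. A vector $x\in X$ is d-hypercyclic for $T_1,\dots,T_N$ if $\{(T_1^nx,\dots,T_N^nx):n\ge0\}$ is dense in $\oplus_{i=1}^N X$ (product topology). A dense d-hypercyclic manifold is a dense linear subspace of $X$ every nonzero vector of which is d-hypercyclic for $T_1,\dots,T_N$. *)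

theory Defs
  imports "HOL-Analysis.Analysis"
begin

text \<open>Scalar field K: either the reals (cplx = False) or the complex numbers
(cplx = True).  A complex Banach space is modelled as a real Banach space
together with the map J (multiplication by the imaginary unit), so that
(a + i b) x = a x + b (J x) and the norm is complex-homogeneous.\<close>

definition complex_structure :: "('a::real_normed_vector \<Rightarrow> 'a) \<Rightarrow> bool" where
  "complex_structure J \<longleftrightarrow> bounded_linear J \<and> (\<forall>x. J (J x) = - x) \<and>
     (\<forall>a b x. norm (a *\<^sub>R x + b *\<^sub>R J x) = sqrt (a\<^sup>2 + b\<^sup>2) * norm x)"

definition K_subspace :: "bool \<Rightarrow> ('a::real_vector \<Rightarrow> 'a) \<Rightarrow> 'a set \<Rightarrow> bool" where
  "K_subspace cplx J M \<longleftrightarrow> subspace M \<and> (cplx \<longrightarrow> J ` M \<subseteq> M)"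

definition K_bounded_linear :: "bool \<Rightarrow> ('a::real_normed_vector \<Rightarrow> 'a) \<Rightarrow> ('a \<Rightarrow> 'a) \<Rightarrow> bool" where
  "K_bounded_linear cplx J T \<longleftrightarrow> bounded_linear T \<and> (cplx \<longrightarrow> (\<forall>x. T (J x) = J (T x)))"

definition separable_X :: "'a::topological_space itself \<Rightarrow> bool" where
  "separable_X _ \<longleftrightarrow> (\<exists>D::'a set. countable D \<and> closure D = UNIV)"

definition infinite_dimensional :: "'a::real_vector itself \<Rightarrow> bool" where
  "infinite_dimensional _ \<longleftrightarrow> (\<forall>B::'a set. finite B \<longrightarrow> span B \<noteq> UNIV)"

definition strong_dbcp :: "(nat \<Rightarrow> 'a::real_normed_vector \<Rightarrow> 'a) \<Rightarrow> nat \<Rightarrow> bool" where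
  "strong_dbcp T N \<longleftrightarrow>
    (\<forall>(L::nat) (W::'a set) (U::int \<Rightarrow> 'a set).
       L \<ge> 1 \<longrightarrow> open W \<longrightarrow> 0 \<in> W \<longrightarrow>
       (\<forall>l\<in>{1 - int L .. int N}. open (U l) \<and> U l \<noteq> {}) \<longrightarrow>
       (\<exists>n::nat. n \<ge> 1 \<and>
          W \<inter> (\<Inter>i\<in>{1..N}. (T i ^^ n) -` U (int i)) \<noteq> {} \<and>
          (\<forall>l\<in>{1 - int L .. 0}. U l \<inter> (\<Inter>i\<in>{1..N}. (T i ^^ n) -` W) \<noteq> {})))"

text \<open>x is d-hypercyclic: the orbit (T_1^n x, ..., T_N^n x), n \<ge> 0, is dense
 in the N-fold product (product topology), i.e. meets every nonempty basic open set
 V_1 \<times> ... \<times> V_N.\<close>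
definition d_hypercyclic :: "(nat \<Rightarrow> 'a::topological_space \<Rightarrow> 'a) \<Rightarrow> nat \<Rightarrow> 'a \<Rightarrow> bool" where
  "d_hypercyclic T N x \<longleftrightarrow>
    (\<forall>V::nat \<Rightarrow> 'a set. (\<forall>i\<in>{1..N}. open (V i) \<and> V i \<noteq> {}) \<longrightarrow>
       (\<exists>n::nat. \<forall>i\<in>{1..N}. (T i ^^ n) x \<in> V i))"

definition dense_d_hypercyclic_manifold ::
  "bool \<Rightarrow> ('a::real_normed_vector \<Rightarrow> 'a) \<Rightarrow> (nat \<Rightarrow> 'a \<Rightarrow> 'a) \<Rightarrow> nat \<Rightarrow> 'a set \<Rightarrow> bool" where
  "dense_d_hypercyclic_manifold cplx J T N M \<longleftrightarrow>
    K_subspace cplx J M \<and> closure M = UNIV \<and> (\<forall>x\<in>M. x \<noteq> 0 \<longrightarrow> d_hypercyclic T N x)"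

end

theory Submission
  imports Defs
begin

(* The Strong Disjoint Blow-up/Collapse Property is read off directly from the criterion: choose
   points of X0 in the open sets U_l.  By (i), for large k the powers T_i^(n_k) send the points with
   l <= 0 into W; by (ii), S_k applied to the points with l >= 1 is a vector of W that all T_i^(n_k)
   carry into the respective U_i at once.

   For the manifold, work in the complete metric space of sequences u : nat => X.  For p, targets
   y_1, ..., y_N and delta > 0, the sequences u for which some power T_i^n moves u_p delta-close to
   y_i while keeping T_i^n u_j and T_i^n (J u_j), j < p, delta-small form an open set; it is dense
   because by (i) and (ii) adding a small S_k(y) to u_p achieves this.  With targets in a countable
   dense set, Baire's theorem gives a sequence u in all these sets whose terms are also dense.  The
   K-linear span of the u_j is then dense, and a nonzero vector of it is a nonzero scalar multiple
   of u_p + sum_{j<p} c_j u_j, which is d-hypercyclic by the choice of u; multiplication by a scalar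
   commutes with the T_i and so preserves d-hypercyclicity. *)

section \<open>Dense sets and open sets of sequences\<close>

lemma closure_eq_UNIV_iff:
  "closure S = UNIV \<longleftrightarrow> (\<forall>U. open U \<and> U \<noteq> {} \<longrightarrow> S \<inter> U \<noteq> {})"
  using dense_intersects_open[of euclidean S] by simp

lemma dense_approachable:
  fixes D :: "'a::metric_space set"
  assumes "closure D = UNIV" "e > 0"
  obtains d where "d \<in> D" "dist d x < e"
  using closure_approachable[of x D] assms by auto

lemma dense_approachable_family:
  fixes D :: "'a::metric_space set"
  assumes "closure D = UNIV" "e > 0"
  obtains y where "\<And>i. y i \<in> D" "\<And>i. dist (y i) (c i) < e"
proof -
  have "\<forall>i. \<exists>d\<in>D. dist d (c i) < e"
    using dense_approachable[OF assms] by metis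
  then show ?thesis
    using that by metis
qed

lemma eventually_ball_subset:
  fixes x :: "'a::metric_space"
  assumes "open U" "x \<in> U"
  shows "eventually (\<lambda>r. ball x r \<subseteq> U) (at_right 0)"
proof -
  obtain e where "e > 0" "ball x e \<subseteq> U"
    using assms open_contains_ball by blast
  moreover have "eventually (\<lambda>r. r < e) (at_right 0)"
    using \<open>e > 0\<close> by (auto simp: eventually_at_right_field)
  ultimately show ?thesis
    by (auto elim!: eventually_mono dest!: subset_ball[of _ e x, OF less_imp_le])
qed

lemma common_ball_radius:
  fixes c :: "'i \<Rightarrow> 'a::metric_space"
  assumes "finite I" "\<And>i. i \<in> I \<Longrightarrow> open (V i)" "\<And>i. i \<in> I \<Longrightarrow> c i \<in> V i"
  obtains r where "r > 0" "\<And>i. i \<in> I \<Longrightarrow> ball (c i) r \<subseteq> V i"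
proof -
  have "eventually (\<lambda>r. r > 0 \<and> (\<forall>i\<in>I. ball (c i) r \<subseteq> V i)) (at_right 0)"
    using assms eventually_ball_subset
    by (intro eventually_conj eventually_at_right_less eventually_ball_finite) auto
  then show ?thesis
    using that eventually_happens'[OF trivial_limit_at_right_real] by blast
qed

lemma dense_ball_subsetsE:
  fixes D :: "'a::metric_space set"
  assumes "closure D = UNIV" "finite I" "\<forall>i\<in>I. open (V i) \<and> V i \<noteq> {}"
  obtains r y where "r > 0" "\<And>i. y i \<in> D" "\<And>i. i \<in> I \<Longrightarrow> ball (y i) r \<subseteq> V i"
proof -
  have "\<forall>i\<in>I. \<exists>z. z \<in> V i"
    using assms(3) by blast
  then obtain c where c: "\<And>i. i \<in> I \<Longrightarrow> c i \<in> V i"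
    using bchoice by metis
  obtain r where "r > 0" and r: "\<And>i. i \<in> I \<Longrightarrow> ball (c i) r \<subseteq> V i"
    using common_ball_radius[of I V c] assms(2,3) c by auto
  obtain y where "\<And>i. y i \<in> D" and y: "\<And>i. dist (y i) (c i) < r / 2"
    using dense_approachable_family[OF assms(1), of "r / 2"] \<open>r > 0\<close> by auto
  have "ball (y i) (r / 2) \<subseteq> V i" if "i \<in> I" for i
  proof
    fix z assume "z \<in> ball (y i) (r / 2)"
    then have "dist (c i) z < r"
      using y[of i] dist_triangle[of "c i" z "y i"] by (simp add: dist_commute)
    then show "z \<in> V i"
      using r[OF that] by auto
  qed
  then show ?thesis
    using that[of "r / 2" y] \<open>r > 0\<close> \<open>\<And>i. y i \<in> D\<close> by simp
qed

lemma closure_Inter_open_dense: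
  fixes \<G> :: "'a::complete_space set set"
  assumes "countable \<G>" "\<And>G. G \<in> \<G> \<Longrightarrow> open G \<and> closure G = UNIV"
  shows "closure (\<Inter>\<G>) = UNIV"
proof -
  have "euclidean closure_of \<Inter>\<G> = topspace (euclidean :: 'a topology)"
    using assms by (intro Baire_category[OF disjI1[OF completely_metrizable_space_euclidean]]) auto
  then show ?thesis by simp
qed

lemma open_fun_box:
  fixes U :: "('i \<Rightarrow> 'a::topological_space) set"
  assumes "open U" "u \<in> U"
  obtains X where "\<And>j. open (X j)" "\<And>j. u j \<in> X j" "finite {j. X j \<noteq> UNIV}"
    "\<And>v. (\<And>j. v j \<in> X j) \<Longrightarrow> v \<in> U"
proof -
  have "openin (product_topology (\<lambda>i. euclidean) UNIV) U"
    using assms(1) by (simp add: euclidean_product_topology)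
  from product_topology_open_contains_basis[OF this assms(2)]
  obtain X where "u \<in> Pi\<^sub>E UNIV X" "\<forall>j. open (X j)" "finite {j. X j \<noteq> UNIV}"
    "Pi\<^sub>E UNIV X \<subseteq> U"
    by auto
  then show ?thesis by (intro that) (auto simp: PiE_UNIV_domain)
qed

lemma open_dense_hitting_sequences:
  fixes B :: "'a::topological_space set"
  assumes "open B" "B \<noteq> {}" "infinite (UNIV :: 'i set)"
  shows "open {u::'i \<Rightarrow> 'a. \<exists>j. u j \<in> B}" "closure {u::'i \<Rightarrow> 'a. \<exists>j. u j \<in> B} = UNIV"
proof -
  have "{u::'i \<Rightarrow> 'a. \<exists>j. u j \<in> B} = (\<Union>j. (\<lambda>u. u j) -` B)" by auto
  moreover have "open ((\<lambda>u::'i \<Rightarrow> 'a. u j) -` B)" for j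
    by (rule open_vimage[OF \<open>open B\<close> continuous_on_product_coordinates])
  ultimately show "open {u::'i \<Rightarrow> 'a. \<exists>j. u j \<in> B}" by (simp add: open_UN)
  show "closure {u::'i \<Rightarrow> 'a. \<exists>j. u j \<in> B} = UNIV"
    unfolding closure_eq_UNIV_iff
  proof (intro allI impI)
    fix U :: "('i \<Rightarrow> 'a) set" assume "open U \<and> U \<noteq> {}"
    then obtain u where "open U" "u \<in> U" by blast
    then obtain X where X: "\<And>j. open (X j)" "\<And>j. u j \<in> X j" "finite {j. X j \<noteq> UNIV}"
      "\<And>v. (\<And>j. v j \<in> X j) \<Longrightarrow> v \<in> U"
      using open_fun_box by blast
    obtain j where "X j = UNIV" using ex_new_if_finite[OF assms(3) X(3)] by blast
    obtain b where "b \<in> B" using assms(2) by blast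
    have "u(j := b) \<in> U" by (rule X(4)) (use X(2) \<open>X j = UNIV\<close> in auto)
    moreover have "u(j := b) \<in> {u. \<exists>j. u j \<in> B}" using \<open>b \<in> B\<close> by auto
    ultimately show "{u. \<exists>j. u j \<in> B} \<inter> U \<noteq> {}" by blast
  qed
qed

lemma closure_range_eq_UNIV_if_hits_balls:
  fixes u :: "nat \<Rightarrow> 'a::metric_space"
  assumes "closure D = UNIV" "\<And>d r. d \<in> D \<Longrightarrow> \<exists>j. u j \<in> ball d (inverse (Suc r))"
  shows "closure (range u) = UNIV"
  unfolding closure_eq_UNIV_iff
proof (intro allI impI)
  fix U :: "'a set" assume "open U \<and> U \<noteq> {}"
  then obtain x e where "e > 0" "ball x e \<subseteq> U"
    by (metis ex_in_conv open_contains_ball)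
  moreover obtain d where "d \<in> D" "dist d x < e / 2"
    using dense_approachable[OF \<open>closure D = UNIV\<close>, of "e / 2"] \<open>e > 0\<close> by auto
  obtain r where "inverse (Suc r) < e / 2"
    using reals_Archimedean \<open>e > 0\<close> by (metis half_gt_zero of_nat_Suc)
  obtain j where "dist d (u j) < inverse (Suc r)"
    using assms(2)[OF \<open>d \<in> D\<close>, of r] by auto
  then have "u j \<in> ball x e"
    using \<open>dist d x < e / 2\<close> \<open>inverse (Suc r) < e / 2\<close> dist_triangle[of x "u j" d]
    by (simp add: dist_commute)
  then show "range u \<inter> U \<noteq> {}"
    using \<open>ball x e \<subseteq> U\<close> by blast
qed

section \<open>The Strong Disjoint Blow-up/Collapse Property\<close>

locale blowup_collapse_criterion =
  fixes T :: "nat \<Rightarrow> 'a::real_normed_vector \<Rightarrow> 'a" and N :: nat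
    and X0 :: "'a set" and nk :: "nat \<Rightarrow> nat" and S :: "nat \<Rightarrow> (nat \<Rightarrow> 'a) \<Rightarrow> 'a"
  assumes X0_dense: "closure X0 = UNIV"
    and collapse: "\<And>x i. x \<in> X0 \<Longrightarrow> i \<in> {1..N} \<Longrightarrow> (\<lambda>k. (T i ^^ nk k) x) \<longlonglongrightarrow> 0"
    and blowup: "\<And>\<epsilon> K x. \<epsilon> > 0 \<Longrightarrow> (\<forall>i\<in>{1..N}. x i \<in> X0) \<Longrightarrow>
      \<exists>k\<ge>K. norm (S k x) < \<epsilon> \<and> (\<forall>i\<in>{1..N}. norm ((T i ^^ nk k) (S k x) - x i) < \<epsilon>)"
begin

lemma blowup_collapse_indexE:
  assumes F: "finite F" "\<And>x i. x \<in> F \<Longrightarrow> i \<in> {1..N} \<Longrightarrow> (\<lambda>k. (T i ^^ nk k) x) \<longlonglongrightarrow> 0"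
    and y: "\<forall>i\<in>{1..N}. y i \<in> X0" and "\<epsilon> > 0"
  obtains k where "norm (S k y) < \<epsilon>"
    "\<And>i. i \<in> {1..N} \<Longrightarrow> norm ((T i ^^ nk k) (S k y) - y i) < \<epsilon>"
    "\<And>i x. i \<in> {1..N} \<Longrightarrow> x \<in> F \<Longrightarrow> norm ((T i ^^ nk k) x) < \<epsilon>"
proof -
  have "eventually (\<lambda>k. norm ((T i ^^ nk k) x) < \<epsilon>) sequentially"
    if "x \<in> F" "i \<in> {1..N}" for x i
    using order_tendstoD(2)[OF tendsto_norm_zero[OF F(2)[OF that]] \<open>\<epsilon> > 0\<close>] .
  then have "eventually (\<lambda>k. \<forall>i\<in>{1..N}. \<forall>x\<in>F. norm ((T i ^^ nk k) x) < \<epsilon>) sequentially"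
    by (intro eventually_ball_finite ballI) (auto simp: F(1))
  then obtain K where "\<And>k. k \<ge> K \<Longrightarrow> \<forall>i\<in>{1..N}. \<forall>x\<in>F. norm ((T i ^^ nk k) x) < \<epsilon>"
    by (auto simp: eventually_sequentially)
  moreover obtain k where "k \<ge> K" "norm (S k y) < \<epsilon>"
    "\<forall>i\<in>{1..N}. norm ((T i ^^ nk k) (S k y) - y i) < \<epsilon>"
    using blowup[OF \<open>\<epsilon> > 0\<close> y] by blast
  ultimately show ?thesis using that by blast
qed

lemma strong_dbcp:
  assumes nk_pos: "\<And>k. nk k > 0"
  shows "strong_dbcp T N"
  unfolding strong_dbcp_def
proof (intro allI impI)
  fix L :: nat and W :: "'a set" and U :: "int \<Rightarrow> 'a set"
  assume "L \<ge> 1" "open W" "0 \<in> W" and U: "\<forall>l\<in>{1 - int L..int N}. open (U l) \<and> U l \<noteq> {}"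
  have "\<forall>l\<in>{1 - int L..int N}. \<exists>x. x \<in> X0 \<inter> U l"
    using U X0_dense by (auto simp: closure_eq_UNIV_iff)
  then obtain x where x: "\<And>l. l \<in> {1 - int L..int N} \<Longrightarrow> x l \<in> X0 \<inter> U l"
    by metis
  obtain r\<^sub>W where "r\<^sub>W > 0" "ball 0 r\<^sub>W \<subseteq> W"
    using \<open>open W\<close> \<open>0 \<in> W\<close> open_contains_ball by blast
  obtain r\<^sub>U where "r\<^sub>U > 0" and r\<^sub>U: "\<And>i. i \<in> {1..N} \<Longrightarrow> ball (x (int i)) r\<^sub>U \<subseteq> U (int i)"
    by (rule common_ball_radius[of "{1..N}" "\<lambda>i. U (int i)" "\<lambda>i. x (int i)"]) (use U x in auto)
  let ?r = "min r\<^sub>W r\<^sub>U" and ?y = "\<lambda>i. x (int i)"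
  obtain k where k: "norm (S k ?y) < ?r"
    "\<And>i. i \<in> {1..N} \<Longrightarrow> norm ((T i ^^ nk k) (S k ?y) - x (int i)) < ?r"
    "\<And>i z. i \<in> {1..N} \<Longrightarrow> z \<in> x ` {1 - int L..0} \<Longrightarrow> norm ((T i ^^ nk k) z) < ?r"
    by (rule blowup_collapse_indexE[where F = "x ` {1 - int L..0}" and y = ?y and \<epsilon> = ?r])
      (use x collapse \<open>r\<^sub>W > 0\<close> \<open>r\<^sub>U > 0\<close> in auto)
  have "S k ?y \<in> W \<inter> (\<Inter>i\<in>{1..N}. (T i ^^ nk k) -` U (int i))"
    using k(1,2) \<open>ball 0 r\<^sub>W \<subseteq> W\<close> r\<^sub>U
    by (force simp: dist_norm norm_minus_commute)
  moreover have "x l \<in> U l \<inter> (\<Inter>i\<in>{1..N}. (T i ^^ nk k) -` W)" if "l \<in> {1 - int L..0}" for l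
    using that x k(3) \<open>ball 0 r\<^sub>W \<subseteq> W\<close> by (force simp: dist_norm)
  ultimately show "\<exists>n\<ge>1. W \<inter> (\<Inter>i\<in>{1..N}. (T i ^^ n) -` U (int i)) \<noteq> {} \<and>
          (\<forall>l\<in>{1 - int L..0}. U l \<inter> (\<Inter>i\<in>{1..N}. (T i ^^ n) -` W) \<noteq> {})"
    using nk_pos[of k] by (intro exI[of _ "nk k"] conjI ballI) (simp, blast+)
qed

end

section \<open>Scalars acting through a complex structure\<close>

lemma sum_lessThan_last_nonzero:
  fixes f :: "nat \<Rightarrow> 'a::comm_monoid_add"
  assumes "(\<Sum>j<P. f j) \<noteq> 0"
  obtains p where "f p \<noteq> 0" "(\<Sum>j<P. f j) = (\<Sum>j<Suc p. f j)"
proof -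
  define Z where "Z = {j. j < P \<and> f j \<noteq> 0}"
  have "finite Z" by (simp add: Z_def)
  moreover have "Z \<noteq> {}"
    using assms by (auto simp: Z_def intro: sum.neutral)
  ultimately have "Max Z \<in> Z"
    by (rule Max_in)
  have le: "\<And>j. j < P \<Longrightarrow> f j \<noteq> 0 \<Longrightarrow> j \<le> Max Z"
    using Max_ge[OF \<open>finite Z\<close>] by (simp add: Z_def)
  have "(\<Sum>j<Suc (Max Z). f j) = (\<Sum>j<P. f j)"
  proof (rule sum.mono_neutral_left)
    show "{..<Suc (Max Z)} \<subseteq> {..<P}"
      using \<open>Max Z \<in> Z\<close> by (auto simp: Z_def)
    show "\<forall>j\<in>{..<P} - {..<Suc (Max Z)}. f j = 0"
      using le by (meson DiffE lessThan_iff not_less_eq_eq less_Suc_eq_le)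
  qed simp
  then show ?thesis
    using that \<open>Max Z \<in> Z\<close> by (auto simp: Z_def)
qed

(* With J the multiplication by i, scaleJ J z is multiplication by the complex number z; with
   J = 0 it is multiplication by Re z, which is how real spaces are handled. *)
definition scaleJ :: "('a::real_vector \<Rightarrow> 'a) \<Rightarrow> complex \<Rightarrow> 'a \<Rightarrow> 'a" where
  "scaleJ J z x = Re z *\<^sub>R x + Im z *\<^sub>R J x"

lemma scaleJ_zero [simp]: "scaleJ J 0 x = 0"
  by (simp add: scaleJ_def)

lemma scaleJ_one [simp]: "scaleJ J 1 x = x"
  by (simp add: scaleJ_def)

lemma scaleJ_add_left: "scaleJ J (z + w) x = scaleJ J z x + scaleJ J w x"
  by (simp add: scaleJ_def algebra_simps)

lemma scaleR_scaleJ: "r *\<^sub>R scaleJ J z x = scaleJ J (of_real r * z) x"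
  by (simp add: scaleJ_def algebra_simps)

lemma linear_scaleJ: "linear J \<Longrightarrow> linear (scaleJ J z)"
  by (auto intro!: linearI simp: scaleJ_def linear_add linear_scale algebra_simps)

lemma bounded_linear_scaleJ: "bounded_linear J \<Longrightarrow> bounded_linear (scaleJ J z)"
  unfolding scaleJ_def
  by (intro bounded_linear_add bounded_linear_scaleR_right bounded_linear_ident
      bounded_linear_compose[OF bounded_linear_scaleR_right])

lemma scaleJ_commute:
  "linear T \<Longrightarrow> (\<And>x. T (J x) = J (T x)) \<Longrightarrow> T (scaleJ J z x) = scaleJ J z (T x)"
  by (simp add: scaleJ_def linear_add linear_scale)

lemma norm_linear_scaleJ_le:
  assumes "linear L"
  shows "norm (L (scaleJ J z x)) \<le> \<bar>Re z\<bar> * norm (L x) + \<bar>Im z\<bar> * norm (L (J x))"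
  using norm_triangle_ineq[of "Re z *\<^sub>R L x" "Im z *\<^sub>R L (J x)"] assms
  by (simp add: scaleJ_def linear_add linear_scale)

lemma scaleJ_scaleJ:
  assumes "linear J" and "(\<forall>x. J (J x) = - x) \<or> z \<in> \<real> \<and> w \<in> \<real>"
  shows "scaleJ J z (scaleJ J w x) = scaleJ J (z * w) x"
  using assms(2)
proof
  assume "\<forall>x. J (J x) = - x"
  then show ?thesis
    using assms(1) by (simp add: scaleJ_def linear_add linear_scale algebra_simps)
next
  assume "z \<in> \<real> \<and> w \<in> \<real>"
  then show ?thesis by (auto simp: scaleJ_def complex_is_Real_iff)
qed

lemma J_scaleJ:
  "linear J \<Longrightarrow> \<forall>x. J (J x) = - x \<Longrightarrow> J (scaleJ J z x) = scaleJ J (\<i> * z) x"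
  by (simp add: scaleJ_def linear_add linear_scale)

lemma surj_scaleJ:
  assumes "linear J" "z \<noteq> 0" "(\<forall>x. J (J x) = - x) \<or> z \<in> \<real>"
  shows "surj (scaleJ J z)"
proof (rule surjI)
  fix x
  show "scaleJ J z (scaleJ J (inverse z) x) = x"
    using assms by (subst scaleJ_scaleJ) (auto simp: Reals_inverse)
qed

definition scaleJ_span :: "('a::real_vector \<Rightarrow> 'a) \<Rightarrow> (nat \<Rightarrow> 'a) \<Rightarrow> 'a set" where
  "scaleJ_span J u = {x. \<exists>P c. x = (\<Sum>j<P. scaleJ J (c j) (u j))}"

lemma scaleJ_spanI: "x = (\<Sum>j<P. scaleJ J (c j) (u j)) \<Longrightarrow> x \<in> scaleJ_span J u"
  unfolding scaleJ_span_def by blast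

lemma scaleJ_spanE:
  assumes "x \<in> scaleJ_span J u"
  obtains P c where "x = (\<Sum>j<P. scaleJ J (c j) (u j))"
  using assms unfolding scaleJ_span_def by blast

lemma in_scaleJ_span: "u j \<in> scaleJ_span J u"
proof (rule scaleJ_spanI)
  show "u j = (\<Sum>i<Suc j. scaleJ J (if i = j then 1 else 0) (u i))"
    by (simp add: if_distrib cong: if_cong)
qed

lemma scaleJ_span_pad:
  fixes u :: "nat \<Rightarrow> 'a::real_vector"
  shows "P \<le> Q \<Longrightarrow> (\<Sum>j<P. scaleJ J (c j) (u j)) = (\<Sum>j<Q. scaleJ J (if j < P then c j else 0) (u j))"
  by (rule sum.mono_neutral_cong_left) auto

lemma subspace_scaleJ_span: "subspace (scaleJ_span J u)"
  unfolding subspace_def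
proof (intro conjI ballI allI)
  show "0 \<in> scaleJ_span J u"
    by (rule scaleJ_spanI[where P = 0]) simp
next
  fix x y assume "x \<in> scaleJ_span J u" "y \<in> scaleJ_span J u"
  obtain P c where x: "x = (\<Sum>j<P. scaleJ J (c j) (u j))"
    using \<open>x \<in> scaleJ_span J u\<close> by (rule scaleJ_spanE)
  obtain Q d where y: "y = (\<Sum>j<Q. scaleJ J (d j) (u j))"
    using \<open>y \<in> scaleJ_span J u\<close> by (rule scaleJ_spanE)
  have "x + y =
      (\<Sum>j<P + Q. scaleJ J ((if j < P then c j else 0) + (if j < Q then d j else 0)) (u j))"
    unfolding x y scaleJ_span_pad[OF le_add1[of P Q]] scaleJ_span_pad[OF le_add2[of Q P]]
    by (simp add: scaleJ_add_left sum.distrib)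
  then show "x + y \<in> scaleJ_span J u"
    by (rule scaleJ_spanI)
next
  fix r :: real and x assume "x \<in> scaleJ_span J u"
  then obtain P c where "x = (\<Sum>j<P. scaleJ J (c j) (u j))"
    by (rule scaleJ_spanE)
  then have "r *\<^sub>R x = (\<Sum>j<P. scaleJ J (of_real r * c j) (u j))"
    by (simp add: scaleR_sum_right scaleR_scaleJ)
  then show "r *\<^sub>R x \<in> scaleJ_span J u"
    by (rule scaleJ_spanI)
qed

lemma J_image_scaleJ_span:
  assumes "linear J" "\<forall>x. J (J x) = - x"
  shows "J ` scaleJ_span J u \<subseteq> scaleJ_span J u"
proof
  fix y assume "y \<in> J ` scaleJ_span J u"
  then obtain x where "x \<in> scaleJ_span J u" "y = J x" by blast
  obtain P c where "x = (\<Sum>j<P. scaleJ J (c j) (u j))"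
    using \<open>x \<in> scaleJ_span J u\<close> by (rule scaleJ_spanE)
  then have "y = J (\<Sum>j<P. scaleJ J (c j) (u j))"
    using \<open>y = J x\<close> by simp
  then have "y = (\<Sum>j<P. scaleJ J (\<i> * c j) (u j))"
    using assms by (simp add: linear_sum J_scaleJ)
  then show "y \<in> scaleJ_span J u"
    by (rule scaleJ_spanI)
qed

lemma scaleJ_span_leading_term:
  assumes "linear J" and J: "(\<forall>x. J (J x) = - x) \<or> (\<forall>x. J x = 0)"
    and "x \<in> scaleJ_span J u" "x \<noteq> 0"
  obtains z p d where "z \<noteq> 0" "(\<forall>x. J (J x) = - x) \<or> z \<in> \<real>"
    "x = scaleJ J z (u p + (\<Sum>j<p. scaleJ J (d j) (u j)))"
proof -
  obtain P c where x: "x = (\<Sum>j<P. scaleJ J (c j) (u j))"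
    using \<open>x \<in> scaleJ_span J u\<close> by (rule scaleJ_spanE)
  \<comment> \<open>For J = 0 only the real parts of the coefficients matter, so they may be taken real.\<close>
  define c' where "c' j = (if \<forall>x. J x = 0 then of_real (Re (c j)) else c j)" for j
  have c': "(\<forall>x. J (J x) = - x) \<or> (\<forall>j. c' j \<in> \<real>)"
    using J by (auto simp: c'_def)
  have "x = (\<Sum>j<P. scaleJ J (c' j) (u j))"
  proof (cases "\<forall>x. J x = 0")
    case True
    then show ?thesis by (simp add: x c'_def scaleJ_def)
  next
    case False
    then show ?thesis by (simp add: x c'_def if_not_P[OF False])
  qed
  moreover obtain p where nz: "scaleJ J (c' p) (u p) \<noteq> 0"
    and "(\<Sum>j<P. scaleJ J (c' j) (u j)) = (\<Sum>j<Suc p. scaleJ J (c' j) (u j))"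
    by (rule sum_lessThan_last_nonzero) (use calculation \<open>x \<noteq> 0\<close> in simp)
  ultimately have x': "x = (\<Sum>j<Suc p. scaleJ J (c' j) (u j))" by simp
  from nz have "c' p \<noteq> 0" by auto
  have "(\<forall>x. J (J x) = - x) \<or> c' p \<in> \<real> \<and> c' j / c' p \<in> \<real>" for j
    using c' by (blast intro: Reals_divide)
  then have "scaleJ J (c' p) (scaleJ J (c' j / c' p) v) = scaleJ J (c' j) v" for j v
    using scaleJ_scaleJ[OF \<open>linear J\<close>] \<open>c' p \<noteq> 0\<close> by simp
  then have x'': "x = scaleJ J (c' p) (u p + (\<Sum>j<p. scaleJ J (c' j / c' p) (u j)))"
    unfolding x' using linear_scaleJ[OF \<open>linear J\<close>, of "c' p"]
    by (simp add: linear_add linear_sum)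
  have "(\<forall>x. J (J x) = - x) \<or> c' p \<in> \<real>"
    using c' by blast
  from that[OF \<open>c' p \<noteq> 0\<close> this x''] show ?thesis .
qed


section \<open>A dense d-hypercyclic manifold\<close>

lemma bounded_linear_funpow:
  fixes f :: "'a::real_normed_vector \<Rightarrow> 'a"
  assumes "bounded_linear f"
  shows "bounded_linear (f ^^ n)"
proof (induction n)
  case 0
  show ?case using bounded_linear_ident by (simp add: id_def)
next
  case (Suc n)
  show ?case using bounded_linear_compose[OF assms Suc.IH] by (simp add: comp_def)
qed

lemma funpow_commute: "(\<And>x. f (g x) = g (f x)) \<Longrightarrow> (f ^^ n) (g x) = g ((f ^^ n) x)"
  by (induction n) auto

definition blowup_collapse_set ::
  "(nat \<Rightarrow> 'a::real_normed_vector \<Rightarrow> 'a) \<Rightarrow> nat \<Rightarrow> ('a \<Rightarrow> 'a) \<Rightarrow> nat \<Rightarrow> (nat \<Rightarrow> 'a) \<Rightarrow> real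
    \<Rightarrow> (nat \<Rightarrow> 'a) set" where
  "blowup_collapse_set T N J p y \<delta> = {u. \<exists>n. \<forall>i\<in>{1..N}. dist ((T i ^^ n) (u p)) (y i) < \<delta> \<and>
      (\<forall>j<p. norm ((T i ^^ n) (u j)) < \<delta> \<and> norm ((T i ^^ n) (J (u j))) < \<delta>)}"

lemma blowup_collapse_set_mono:
  "\<delta> \<le> \<delta>' \<Longrightarrow> blowup_collapse_set T N J p y \<delta> \<subseteq> blowup_collapse_set T N J p y \<delta>'"
  unfolding blowup_collapse_set_def by (smt (verit, best) Collect_mono_iff)

lemma blowup_collapse_set_restrict:
  "blowup_collapse_set T N J p (restrict y {1..N}) \<delta> = blowup_collapse_set T N J p y \<delta>"
  unfolding blowup_collapse_set_def by simp

lemma blowup_collapse_set_inverse_SucI: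
  assumes "\<And>r. u \<in> blowup_collapse_set T N J p y (inverse (Suc r))" "\<delta> > 0"
  shows "u \<in> blowup_collapse_set T N J p y \<delta>"
proof -
  obtain r where "inverse (Suc r) < \<delta>"
    using reals_Archimedean \<open>\<delta> > 0\<close> by (metis of_nat_Suc)
  then show ?thesis
    using assms(1)[of r] blowup_collapse_set_mono[OF less_imp_le] by blast
qed

lemma open_blowup_collapse_set:
  fixes T :: "nat \<Rightarrow> 'a::real_normed_vector \<Rightarrow> 'a"
  assumes "\<And>i. i \<in> {1..N} \<Longrightarrow> bounded_linear (T i)" "bounded_linear J"
  shows "open (blowup_collapse_set T N J p y \<delta>)"
proof -
  have cont: "continuous_on UNIV (\<lambda>u::nat \<Rightarrow> 'a. g (u j))" if "bounded_linear g" for g j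
    by (rule continuous_on_compose2[OF linear_continuous_on[OF that]
          continuous_on_product_coordinates]) auto
  have "bounded_linear (T i ^^ n)" "bounded_linear (\<lambda>x. (T i ^^ n) (J x))" if "i \<in> {1..N}" for i n
    using bounded_linear_funpow[OF assms(1)[OF that]] bounded_linear_compose assms(2) by blast+
  note cont' = this[THEN cont]
  have "blowup_collapse_set T N J p y \<delta> = (\<Union>n. \<Inter>i\<in>{1..N}.
      {u. dist ((T i ^^ n) (u p)) (y i) < \<delta>} \<inter>
      (\<Inter>j\<in>{..<p}. {u. norm ((T i ^^ n) (u j)) < \<delta>} \<inter> {u. norm ((T i ^^ n) (J (u j))) < \<delta>}))"
    unfolding blowup_collapse_set_def by auto
  also have "open \<dots>"
    by (intro open_UN open_INT open_Int ballI finite_atLeastAtMost finite_lessThan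
        open_Collect_less continuous_intros cont') auto
  finally show ?thesis .
qed

lemma blowup_collapse_set_move_targets:
  assumes "\<And>i. i \<in> {1..N} \<Longrightarrow> dist (y' i) (y i) \<le> \<eta>"
  shows "blowup_collapse_set T N J p y' \<delta> \<subseteq> blowup_collapse_set T N J p y (\<delta> + \<eta>)"
proof
  fix u assume "u \<in> blowup_collapse_set T N J p y' \<delta>"
  then obtain n where n: "\<forall>i\<in>{1..N}. dist ((T i ^^ n) (u p)) (y' i) < \<delta> \<and>
      (\<forall>j<p. norm ((T i ^^ n) (u j)) < \<delta> \<and> norm ((T i ^^ n) (J (u j))) < \<delta>)"
    unfolding blowup_collapse_set_def by blast
  have "\<eta> \<ge> 0" if "i \<in> {1..N}" for i
    using assms[OF that] zero_le_dist order_trans by blast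
  moreover have "dist ((T i ^^ n) (u p)) (y i) < \<delta> + \<eta>" if "i \<in> {1..N}" for i
    using n assms[OF that] dist_triangle[of "(T i ^^ n) (u p)" "y i" "y' i"] that by force
  ultimately show "u \<in> blowup_collapse_set T N J p y (\<delta> + \<eta>)"
    unfolding blowup_collapse_set_def using n by (intro CollectI exI[of _ n]) force
qed

lemma d_hypercyclic_image:
  fixes T :: "nat \<Rightarrow> 'a::topological_space \<Rightarrow> 'a"
  assumes "d_hypercyclic T N x" "continuous_on UNIV A" "surj A"
    and "\<And>i n x. i \<in> {1..N} \<Longrightarrow> (T i ^^ n) (A x) = A ((T i ^^ n) x)"
  shows "d_hypercyclic T N (A x)"
  unfolding d_hypercyclic_def
proof (intro allI impI)
  fix V :: "nat \<Rightarrow> 'a set" assume V: "\<forall>i\<in>{1..N}. open (V i) \<and> V i \<noteq> {}"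
  have "\<forall>i\<in>{1..N}. open (A -` V i) \<and> A -` V i \<noteq> {}"
    using V open_vimage[OF _ assms(2)] surj_vimage_empty[OF \<open>surj A\<close>] by blast
  then obtain n where "\<forall>i\<in>{1..N}. (T i ^^ n) x \<in> A -` V i"
    using assms(1) unfolding d_hypercyclic_def by (elim allE[of _ "\<lambda>i. A -` V i"]) blast
  then show "\<exists>n. \<forall>i\<in>{1..N}. (T i ^^ n) (A x) \<in> V i"
    using assms(4) by auto
qed

lemma dist_linear_leading_term_le:
  assumes "linear L" "\<And>j. j < p \<Longrightarrow> norm (L (u j)) < \<delta> \<and> norm (L (J (u j))) < \<delta>"
  shows "dist (L (u p + (\<Sum>j<p. scaleJ J (d j) (u j)))) y
    \<le> dist (L (u p)) y + (\<Sum>j<p. \<bar>Re (d j)\<bar> + \<bar>Im (d j)\<bar>) * \<delta>"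
proof -
  have "norm (L (\<Sum>j<p. scaleJ J (d j) (u j))) \<le> (\<Sum>j<p. norm (L (scaleJ J (d j) (u j))))"
    using \<open>linear L\<close> by (simp add: linear_sum norm_sum)
  also have "\<dots> \<le> (\<Sum>j<p. (\<bar>Re (d j)\<bar> + \<bar>Im (d j)\<bar>) * \<delta>)"
  proof (rule sum_mono)
    fix j assume "j \<in> {..<p}"
    then have "\<bar>Re (d j)\<bar> * norm (L (u j)) + \<bar>Im (d j)\<bar> * norm (L (J (u j)))
        \<le> \<bar>Re (d j)\<bar> * \<delta> + \<bar>Im (d j)\<bar> * \<delta>"
      using assms(2)[of j] by (intro add_mono mult_left_mono) auto
    then show "norm (L (scaleJ J (d j) (u j))) \<le> (\<bar>Re (d j)\<bar> + \<bar>Im (d j)\<bar>) * \<delta>"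
      using norm_linear_scaleJ_le[OF \<open>linear L\<close>, of J "d j" "u j"] by (simp add: distrib_right)
  qed
  finally have "norm (L (\<Sum>j<p. scaleJ J (d j) (u j))) \<le> (\<Sum>j<p. \<bar>Re (d j)\<bar> + \<bar>Im (d j)\<bar>) * \<delta>"
    by (simp add: sum_distrib_right)
  moreover have eq: "L (u p + (\<Sum>j<p. scaleJ J (d j) (u j))) - y
      = (L (u p) - y) + L (\<Sum>j<p. scaleJ J (d j) (u j))"
    using \<open>linear L\<close> by (simp add: linear_add)
  ultimately show ?thesis
    using norm_triangle_ineq[of "L (u p) - y" "L (\<Sum>j<p. scaleJ J (d j) (u j))"]
    unfolding dist_norm eq by linarith
qed

lemma d_hypercyclic_leading_term:
  fixes T :: "nat \<Rightarrow> 'a::real_normed_vector \<Rightarrow> 'a"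
  assumes lin: "\<And>i n. i \<in> {1..N} \<Longrightarrow> linear (T i ^^ n)" and "closure D = UNIV"
    and u: "\<And>y \<delta>. (\<And>i. i \<in> {1..N} \<Longrightarrow> y i \<in> D) \<Longrightarrow> \<delta> > 0 \<Longrightarrow>
      u \<in> blowup_collapse_set T N J p y \<delta>"
  shows "d_hypercyclic T N (u p + (\<Sum>j<p. scaleJ J (d j) (u j)))"
  unfolding d_hypercyclic_def
proof (intro allI impI)
  fix V :: "nat \<Rightarrow> 'a set" assume "\<forall>i\<in>{1..N}. open (V i) \<and> V i \<noteq> {}"
  then obtain r y where "r > 0" "\<And>i. y i \<in> D" and r: "\<And>i. i \<in> {1..N} \<Longrightarrow> ball (y i) r \<subseteq> V i"
    by (rule dense_ball_subsetsE[OF \<open>closure D = UNIV\<close> finite_atLeastAtMost]) auto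
  define C where "C = (\<Sum>j<p. \<bar>Re (d j)\<bar> + \<bar>Im (d j)\<bar>)"
  have "C \<ge> 0" by (simp add: C_def sum_nonneg)
  define \<delta> where "\<delta> = r / (1 + C)"
  have "\<delta> > 0"
    using \<open>r > 0\<close> \<open>C \<ge> 0\<close> by (simp add: \<delta>_def)
  have "\<delta> + C * \<delta> = (1 + C) * \<delta>"
    by (simp add: algebra_simps)
  also have "\<dots> = r"
    using \<open>C \<ge> 0\<close> unfolding \<delta>_def by simp
  finally have "\<delta> + C * \<delta> = r" .
  have "u \<in> blowup_collapse_set T N J p y \<delta>"
    using \<open>\<And>i. y i \<in> D\<close> \<open>\<delta> > 0\<close> by (intro u)
  then obtain n where n: "\<forall>i\<in>{1..N}. dist ((T i ^^ n) (u p)) (y i) < \<delta> \<and>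
      (\<forall>j<p. norm ((T i ^^ n) (u j)) < \<delta> \<and> norm ((T i ^^ n) (J (u j))) < \<delta>)"
    unfolding blowup_collapse_set_def mem_Collect_eq by (elim exE)
  have "(T i ^^ n) (u p + (\<Sum>j<p. scaleJ J (d j) (u j))) \<in> V i" if "i \<in> {1..N}" for i
  proof -
    let ?x = "u p + (\<Sum>j<p. scaleJ J (d j) (u j))"
    have "dist ((T i ^^ n) ?x) (y i) \<le> dist ((T i ^^ n) (u p)) (y i) + C * \<delta>"
      unfolding C_def using n that by (intro dist_linear_leading_term_le lin) auto
    moreover have "dist ((T i ^^ n) (u p)) (y i) < \<delta>"
      using n that by blast
    ultimately have "(T i ^^ n) ?x \<in> ball (y i) r"
      using \<open>\<delta> + C * \<delta> = r\<close> by (simp add: dist_commute)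
    then show ?thesis
      using r[OF that] by blast
  qed
  then show "\<exists>n. \<forall>i\<in>{1..N}. (T i ^^ n) (u p + (\<Sum>j<p. scaleJ J (d j) (u j))) \<in> V i"
    by blast
qed

lemma d_hypercyclic_in_scaleJ_span:
  fixes T :: "nat \<Rightarrow> 'a::real_normed_vector \<Rightarrow> 'a"
  assumes bl: "\<And>i. i \<in> {1..N} \<Longrightarrow> bounded_linear (T i)" and "bounded_linear J"
    and J: "(\<forall>x. J (J x) = - x) \<or> (\<forall>x. J x = 0)"
    and com: "\<And>i x. i \<in> {1..N} \<Longrightarrow> T i (J x) = J (T i x)"
    and "closure D = UNIV"
    and u: "\<And>p y \<delta>. (\<And>i. i \<in> {1..N} \<Longrightarrow> y i \<in> D) \<Longrightarrow> \<delta> > 0 \<Longrightarrow> u \<in> blowup_collapse_set T N J p y \<delta>"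
    and "x \<in> scaleJ_span J u" "x \<noteq> 0"
  shows "d_hypercyclic T N x"
proof -
  have "linear J"
    using \<open>bounded_linear J\<close> bounded_linear.linear by blast
  obtain z p d where "z \<noteq> 0" "(\<forall>x. J (J x) = - x) \<or> z \<in> \<real>"
    and x: "x = scaleJ J z (u p + (\<Sum>j<p. scaleJ J (d j) (u j)))"
    by (rule scaleJ_span_leading_term[OF \<open>linear J\<close> J \<open>x \<in> scaleJ_span J u\<close> \<open>x \<noteq> 0\<close>])
  have lin: "linear (T i ^^ n)" if "i \<in> {1..N}" for i n
    using bounded_linear_funpow[OF bl[OF that]] bounded_linear.linear by blast
  have "d_hypercyclic T N (u p + (\<Sum>j<p. scaleJ J (d j) (u j)))"
    using \<open>closure D = UNIV\<close> by (intro d_hypercyclic_leading_term lin u)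
  moreover have "continuous_on UNIV (scaleJ J z)"
    by (rule linear_continuous_on[OF bounded_linear_scaleJ[OF \<open>bounded_linear J\<close>]])
  moreover have "surj (scaleJ J z)"
    by (rule surj_scaleJ) fact+
  moreover have "(T i ^^ n) (scaleJ J z v) = scaleJ J z ((T i ^^ n) v)" if "i \<in> {1..N}" for i n v
    by (rule scaleJ_commute[OF lin[OF that]], rule funpow_commute, rule com[OF that])
  ultimately show ?thesis
    unfolding x by (rule d_hypercyclic_image)
qed

locale linear_blowup_collapse_criterion = blowup_collapse_criterion +
  fixes J :: "'a::real_normed_vector \<Rightarrow> 'a"
  assumes T_bounded_linear: "\<And>i. i \<in> {1..N} \<Longrightarrow> bounded_linear (T i)"
    and J_bounded_linear: "bounded_linear J"
    and T_J_commute: "\<And>i x. i \<in> {1..N} \<Longrightarrow> T i (J x) = J (T i x)"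
begin

lemma blowup_collapse_perturbationE:
  assumes w: "\<And>j. j \<le> p \<Longrightarrow> w j \<in> X0" and y: "\<forall>i\<in>{1..N}. y i \<in> X0" and "\<epsilon> > 0"
  obtains s where "norm s < \<epsilon>" "w(p := w p + s) \<in> blowup_collapse_set T N J p y \<epsilon>"
proof -
  define F where "F = w ` {..p} \<union> (\<lambda>j. J (w j)) ` {..<p}"
  have conv: "(\<lambda>k. (T i ^^ nk k) x) \<longlonglongrightarrow> 0" if "x \<in> F" "i \<in> {1..N}" for x i
  proof -
    have "(\<lambda>k. (T i ^^ nk k) (J (w j))) \<longlonglongrightarrow> 0" if "j < p" for j
      using bounded_linear.tendsto_zero[OF J_bounded_linear collapse[OF w \<open>i \<in> {1..N}\<close>]] that
      by (simp add: funpow_commute T_J_commute[OF \<open>i \<in> {1..N}\<close>])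
    then show ?thesis using that w collapse unfolding F_def by auto
  qed
  obtain k where k: "norm (S k y) < \<epsilon> / 2"
    "\<And>i. i \<in> {1..N} \<Longrightarrow> norm ((T i ^^ nk k) (S k y) - y i) < \<epsilon> / 2"
    "\<And>i x. i \<in> {1..N} \<Longrightarrow> x \<in> F \<Longrightarrow> norm ((T i ^^ nk k) x) < \<epsilon> / 2"
    by (rule blowup_collapse_indexE[OF _ conv y, where F = F and \<epsilon> = "\<epsilon> / 2"])
      (use \<open>\<epsilon> > 0\<close> in \<open>auto simp: F_def\<close>)
  have "dist ((T i ^^ nk k) (w p + S k y)) (y i) < \<epsilon>" if "i \<in> {1..N}" for i
  proof -
    have "linear (T i ^^ nk k)"
      using bounded_linear_funpow[OF T_bounded_linear[OF that]] bounded_linear.linear by blast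
    then have eq: "(T i ^^ nk k) (w p + S k y) - y i
        = (T i ^^ nk k) (w p) + ((T i ^^ nk k) (S k y) - y i)"
      by (simp add: linear_add)
    have "norm ((T i ^^ nk k) (w p)) < \<epsilon> / 2"
      using k(3)[OF that] by (simp add: F_def)
    then show ?thesis
      using k(2)[OF that] norm_triangle_ineq[of "(T i ^^ nk k) (w p)" "(T i ^^ nk k) (S k y) - y i"]
      unfolding dist_norm eq by linarith
  qed
  moreover have "norm ((T i ^^ nk k) (w j)) < \<epsilon>" "norm ((T i ^^ nk k) (J (w j))) < \<epsilon>"
    if "i \<in> {1..N}" "j < p" for i j
    using k(3)[OF that(1), of "w j"] k(3)[OF that(1), of "J (w j)"] that \<open>\<epsilon> > 0\<close>
    by (auto simp: F_def)
  ultimately have "w(p := w p + S k y) \<in> blowup_collapse_set T N J p y \<epsilon>"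
    unfolding blowup_collapse_set_def by (intro CollectI exI[of _ "nk k"]) simp
  then show ?thesis
    by (rule that[rotated]) (use k(1) norm_ge_zero[of "S k y"] in linarith)
qed

lemma dense_blowup_collapse_set:
  assumes "\<delta> > 0"
  shows "closure (blowup_collapse_set T N J p y \<delta>) = UNIV"
  unfolding closure_eq_UNIV_iff
proof (intro allI impI)
  fix U :: "(nat \<Rightarrow> 'a) set" assume "open U \<and> U \<noteq> {}"
  then obtain u where "open U" "u \<in> U" by blast
  then obtain X where X_open: "\<And>j. open (X j)" and "\<And>j. u j \<in> X j" "finite {j. X j \<noteq> UNIV}"
    and X: "\<And>v. (\<And>j. v j \<in> X j) \<Longrightarrow> v \<in> U"
    using open_fun_box by blast
  have "\<forall>j. \<exists>w. w \<in> X0 \<inter> X j"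
    using X_open \<open>\<And>j. u j \<in> X j\<close> X0_dense unfolding closure_eq_UNIV_iff by blast
  then obtain w where w: "\<And>j. w j \<in> X0 \<inter> X j" by metis
  then obtain \<rho> where "\<rho> > 0" "ball (w p) \<rho> \<subseteq> X p"
    using X_open open_contains_ball by blast
  obtain y' where "\<And>i. y' i \<in> X0" and y': "\<And>i. dist (y' i) (y i) < \<delta> / 2"
    using dense_approachable_family[OF X0_dense, of "\<delta> / 2"] \<open>\<delta> > 0\<close> by auto
  obtain s where "norm s < min \<rho> (\<delta> / 2)"
    and s: "w(p := w p + s) \<in> blowup_collapse_set T N J p y' (min \<rho> (\<delta> / 2))"
    by (rule blowup_collapse_perturbationE[where w = w and p = p and y = y'
          and \<epsilon> = "min \<rho> (\<delta> / 2)"])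
      (use w \<open>\<And>i. y' i \<in> X0\<close> \<open>\<rho> > 0\<close> \<open>\<delta> > 0\<close> in auto)
  have "w p + s \<in> X p"
    using \<open>norm s < min \<rho> (\<delta> / 2)\<close> \<open>ball (w p) \<rho> \<subseteq> X p\<close> by (auto simp: dist_norm)
  then have "w(p := w p + s) \<in> U"
    using w by (intro X) auto
  moreover have "w(p := w p + s) \<in> blowup_collapse_set T N J p y \<delta>"
  proof -
    have "dist (y' i) (y i) \<le> \<delta> / 2" for i
      using y'[of i] by simp
    then have "w(p := w p + s) \<in> blowup_collapse_set T N J p y (min \<rho> (\<delta> / 2) + \<delta> / 2)"
      using blowup_collapse_set_move_targets s by blast
    then show ?thesis
      by (rule set_mp[OF blowup_collapse_set_mono, rotated]) simp
  qed
  ultimately show "blowup_collapse_set T N J p y \<delta> \<inter> U \<noteq> {}" by blast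
qed


lemma open_dense_blowup_collapse_set:
  assumes "\<delta> > 0"
  shows "open (blowup_collapse_set T N J p y \<delta>) \<and> closure (blowup_collapse_set T N J p y \<delta>) = UNIV"
proof
  show "open (blowup_collapse_set T N J p y \<delta>)"
    by (rule open_blowup_collapse_set[OF T_bounded_linear J_bounded_linear])
qed (rule dense_blowup_collapse_set[OF assms])

end

lemma blowup_collapse_sequenceE:
  fixes T :: "nat \<Rightarrow> 'a::banach \<Rightarrow> 'a" and D :: "'a set"
  assumes "linear_blowup_collapse_criterion T N X0 nk S J" "countable D" "closure D = UNIV"
  obtains u where "closure (range u) = UNIV"
    "\<And>p y \<delta>. (\<And>i. i \<in> {1..N} \<Longrightarrow> y i \<in> D) \<Longrightarrow> \<delta> > 0 \<Longrightarrow>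
      u \<in> blowup_collapse_set T N J p y \<delta>"
proof -
  interpret linear_blowup_collapse_criterion T N X0 nk S J by fact
  define \<G>\<^sub>1 where "\<G>\<^sub>1 = (\<lambda>(d, r). {u::nat \<Rightarrow> 'a. \<exists>j. u j \<in> ball d (inverse (Suc r))}) ` (D \<times> UNIV)"
  define \<G>\<^sub>2 where "\<G>\<^sub>2 = (\<lambda>(p, y, r). blowup_collapse_set T N J p y (inverse (Suc r)))
    ` (UNIV \<times> (\<Pi>\<^sub>E i\<in>{1..N}. D) \<times> UNIV)"
  have "countable (\<G>\<^sub>1 \<union> \<G>\<^sub>2)"
    unfolding \<G>\<^sub>1_def \<G>\<^sub>2_def using \<open>countable D\<close>
    by (intro countable_Un countable_image countable_SIGMA countable_PiE) auto
  moreover have "open G \<and> closure G = UNIV" if "G \<in> \<G>\<^sub>1" for G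
  proof -
    from that obtain d r where "G = {u. \<exists>j. u j \<in> ball d (inverse (Suc r))}"
      unfolding \<G>\<^sub>1_def by auto
    then show ?thesis
      using open_dense_hitting_sequences[OF open_ball _ infinite_UNIV_nat, of d "inverse (Suc r)"]
      by simp
  qed
  moreover have "open G \<and> closure G = UNIV" if "G \<in> \<G>\<^sub>2" for G
    using that open_dense_blowup_collapse_set unfolding \<G>\<^sub>2_def by auto
  ultimately have "closure (\<Inter>(\<G>\<^sub>1 \<union> \<G>\<^sub>2)) = UNIV"
    by (intro closure_Inter_open_dense) blast+
  then obtain u where u: "u \<in> \<Inter>(\<G>\<^sub>1 \<union> \<G>\<^sub>2)"
    by (metis UNIV_I closure_empty equals0I)
  show ?thesis
  proof (rule that)
    show "closure (range u) = UNIV"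
    proof (rule closure_range_eq_UNIV_if_hits_balls[OF \<open>closure D = UNIV\<close>])
      fix d r assume "d \<in> D"
      then have "{v. \<exists>j. v j \<in> ball d (inverse (Suc r))} \<in> \<G>\<^sub>1"
        unfolding \<G>\<^sub>1_def by (intro image_eqI[of _ _ "(d, r)"]) auto
      then show "\<exists>j. u j \<in> ball d (inverse (Suc r))"
        using u by blast
    qed
  next
    fix p y and \<delta> :: real assume "\<And>i. i \<in> {1..N} \<Longrightarrow> y i \<in> D" "\<delta> > 0"
    then have "blowup_collapse_set T N J p (restrict y {1..N}) (inverse (Suc r)) \<in> \<G>\<^sub>2" for r
      unfolding \<G>\<^sub>2_def by (intro image_eqI[of _ _ "(p, restrict y {1..N}, r)"]) auto
    then have "u \<in> blowup_collapse_set T N J p y (inverse (Suc r))" for r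
      using u blowup_collapse_set_restrict by blast
    then show "u \<in> blowup_collapse_set T N J p y \<delta>"
      using \<open>\<delta> > 0\<close> by (rule blowup_collapse_set_inverse_SucI)
  qed
qed

lemma dense_d_hypercyclic_scaleJ_spanE:
  fixes T :: "nat \<Rightarrow> 'a::banach \<Rightarrow> 'a" and D :: "'a set"
  assumes crit: "linear_blowup_collapse_criterion T N X0 nk S J"
    and J: "(\<forall>x. J (J x) = - x) \<or> (\<forall>x. J x = 0)" and "countable D" "closure D = UNIV"
  obtains u where "closure (scaleJ_span J u) = UNIV"
    "\<And>x. x \<in> scaleJ_span J u \<Longrightarrow> x \<noteq> 0 \<Longrightarrow> d_hypercyclic T N x"
proof -
  interpret linear_blowup_collapse_criterion T N X0 nk S J by (fact crit)
  obtain u where "closure (range u) = UNIV"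
    and u: "\<And>p y \<delta>. (\<And>i. i \<in> {1..N} \<Longrightarrow> y i \<in> D) \<Longrightarrow> \<delta> > 0 \<Longrightarrow>
      u \<in> blowup_collapse_set T N J p y \<delta>"
    by (rule blowup_collapse_sequenceE[OF crit \<open>countable D\<close> \<open>closure D = UNIV\<close>]) simp
  have "range u \<subseteq> scaleJ_span J u"
    using in_scaleJ_span by blast
  then have dense: "closure (scaleJ_span J u) = UNIV"
    using closure_mono \<open>closure (range u) = UNIV\<close> by blast
  have hc: "d_hypercyclic T N x" if "x \<in> scaleJ_span J u" "x \<noteq> 0" for x
    by (rule d_hypercyclic_in_scaleJ_span[OF T_bounded_linear J_bounded_linear J T_J_commute
          \<open>closure D = UNIV\<close>])
      (assumption | fact u that)+
  show ?thesis
    by (rule that[OF dense hc])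
qed

theorem theorem2p2:
  fixes cplx :: bool and J :: "'a::banach \<Rightarrow> 'a"
    and T :: "nat \<Rightarrow> 'a \<Rightarrow> 'a" and N :: nat
    and nk :: "nat \<Rightarrow> nat" and X0 :: "'a set"
    and S :: "nat \<Rightarrow> (nat \<Rightarrow> 'a) \<Rightarrow> 'a"
  assumes field: "cplx \<Longrightarrow> complex_structure J"
    and sep: "separable_X TYPE('a)"
    and infdim: "infinite_dimensional TYPE('a)"
    and ops: "\<And>i. i \<in> {1..N} \<Longrightarrow> K_bounded_linear cplx J (T i)"
    and N2: "N \<ge> 2"
    and nk_mono: "strict_mono nk" and nk_pos: "\<And>k. nk k > 0"
    and X0_dense: "closure X0 = UNIV"
    and i: "\<And>x i. x \<in> X0 \<Longrightarrow> i \<in> {1..N} \<Longrightarrow> (\<lambda>k. (T i ^^ nk k) x) \<longlonglongrightarrow> 0"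
    and ii: "\<And>\<epsilon> K x. \<epsilon> > 0 \<Longrightarrow> (\<forall>i\<in>{1..N}. x i \<in> X0) \<Longrightarrow>
              \<exists>k\<ge>K. norm (S k x) < \<epsilon> \<and>
                     (\<forall>i\<in>{1..N}. norm ((T i ^^ nk k) (S k x) - x i) < \<epsilon>)"
  shows "strong_dbcp T N \<and> (\<exists>M. dense_d_hypercyclic_manifold cplx J T N M)"
proof -
  have crit: "blowup_collapse_criterion T N X0 nk S"
    by unfold_locales (fact X0_dense i ii)+
  define J' where "J' = (if cplx then J else (\<lambda>_. 0))"
  have "bounded_linear J'" and J': "(\<forall>x. J' (J' x) = - x) \<or> (\<forall>x. J' x = 0)"
    using field by (auto simp: J'_def complex_structure_def)
  have bl: "\<And>i. i \<in> {1..N} \<Longrightarrow> bounded_linear (T i)"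
    using ops by (simp add: K_bounded_linear_def)
  have "\<And>i x. i \<in> {1..N} \<Longrightarrow> T i (J' x) = J' (T i x)"
    using ops bl linear_0[OF bounded_linear.linear] by (auto simp: J'_def K_bounded_linear_def)
  with crit bl \<open>bounded_linear J'\<close> have lin_crit: "linear_blowup_collapse_criterion T N X0 nk S J'"
    by (simp add: linear_blowup_collapse_criterion_def linear_blowup_collapse_criterion_axioms_def)
  obtain D :: "'a set" where "countable D" "closure D = UNIV"
    using sep by (auto simp: separable_X_def)
  then obtain u where "closure (scaleJ_span J' u) = UNIV"
    "\<And>x. x \<in> scaleJ_span J' u \<Longrightarrow> x \<noteq> 0 \<Longrightarrow> d_hypercyclic T N x"
    by (rule dense_d_hypercyclic_scaleJ_spanE[OF lin_crit J']) simp
  moreover have "J ` scaleJ_span J' u \<subseteq> scaleJ_span J' u" if cplx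
    using J_image_scaleJ_span[OF bounded_linear.linear, of J' u] field[OF that] that
    by (simp add: J'_def complex_structure_def)
  ultimately have "dense_d_hypercyclic_manifold cplx J T N (scaleJ_span J' u)"
    unfolding dense_d_hypercyclic_manifold_def K_subspace_def
    using subspace_scaleJ_span by simp
  then show ?thesis
    using blowup_collapse_criterion.strong_dbcp[OF crit nk_pos] by blast
qed

end
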